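(* Let $I$ be a BPPS instance with $d$ scenarios and let $\mathcal{B}$ be a minimal solution for $I$. Then $\mathrm{val}_{VBPP}(\mathcal{B})\le\sqrt{d}\,\mathrm{val}_{BPPS}(\mathcal{B})$, where $\mathrm{val}_{VBPP}(\mathcal{B})=|\mathcal{B}|$.
   Context: BPPS: given a number $d$ of scenarios, a set $\mathcal{I}=\{1,\dots,n\}$ of items, each item $i$ having a size $s_i\in\mathbb{Q}_+$ and a set of scenarios $\mathcal{K}_i\subseteq\{1,\dots,d\}$, and unlimited identical bins of capacity $1$ (instances are normalized so that the capacity is $1$). For each scenario $k$, $S_k=\{i\in\mathcal{I}: k\in\mathcal{K}_i\}$. A solution is a partition $\mathcal{B}$ of $\mathcal{I}$ (into nonempty parts, called bins) such that for every $B\in\mathcal{B}$ and every scenario $k$, $\sum_{i\in B\cap S_k}s_i\le 1$. Its value is $\mathrm{val}_{BPPS}(\mathcal{B})=\max_{k\in[d]}|\{B\in\mathcal{B}: B\cap S_k\neq\emptyset\}|$. A solution $\mathcal{B}$ is minimal if for any two distinct bins $A,B\in\mathcal{B}$ there is a scenario $k$ with $\sum_{i\in A\cap S_k}s_i+\sum_{i\in B\cap S_k}s_i>1$. *)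

theory Defs
  imports Complex_Main "HOL-Library.Disjoint_Sets"
begin

definition bpps_instance :: "nat \<Rightarrow> 'a set \<Rightarrow> ('a \<Rightarrow> rat) \<Rightarrow> ('a \<Rightarrow> nat set) \<Rightarrow> bool" where
  "bpps_instance d I s K \<longleftrightarrow> finite I \<and>
     (\<forall>i\<in>I. 0 \<le> s i \<and> K i \<subseteq> {1..d} \<and> K i \<noteq> {})"

definition scen :: "'a set \<Rightarrow> ('a \<Rightarrow> nat set) \<Rightarrow> nat \<Rightarrow> 'a set" where
  "scen I K k = {i\<in>I. k \<in> K i}"

definition bpps_solution :: "nat \<Rightarrow> 'a set \<Rightarrow> ('a \<Rightarrow> rat) \<Rightarrow> ('a \<Rightarrow> nat set) \<Rightarrow> 'a set set \<Rightarrow> bool" where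
  "bpps_solution d I s K \<B> \<longleftrightarrow> partition_on I \<B> \<and>
     (\<forall>B\<in>\<B>. \<forall>k\<in>{1..d}. (\<Sum>i\<in>B \<inter> scen I K k. s i) \<le> 1)"

definition val_bpps :: "nat \<Rightarrow> 'a set \<Rightarrow> ('a \<Rightarrow> nat set) \<Rightarrow> 'a set set \<Rightarrow> nat" where
  "val_bpps d I K \<B> = Max ((\<lambda>k. card {B\<in>\<B>. B \<inter> scen I K k \<noteq> {}}) ` {1..d})"

definition val_vbpp :: "'a set set \<Rightarrow> nat" where
  "val_vbpp \<B> = card \<B>"

definition bpps_minimal :: "nat \<Rightarrow> 'a set \<Rightarrow> ('a \<Rightarrow> rat) \<Rightarrow> ('a \<Rightarrow> nat set) \<Rightarrow> 'a set set \<Rightarrow> bool" where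
  "bpps_minimal d I s K \<B> \<longleftrightarrow> bpps_solution d I s K \<B> \<and>
     (\<forall>A\<in>\<B>. \<forall>B\<in>\<B>. A \<noteq> B \<longrightarrow>
        (\<exists>k\<in>{1..d}. (\<Sum>i\<in>A \<inter> scen I K k. s i) + (\<Sum>i\<in>B \<inter> scen I K k. s i) > 1))"

end

theory Submission
  imports Defs
begin

text \<open>In a minimal solution any two bins, equal or not, are both used in a common scenario: two
  distinct bins overflow together in some scenario, and neither fits alone, so each contributes
  to it. Hence the \<open>|\<B>|\<^sup>2\<close> ordered pairs of bins are covered by the \<open>d\<close> squares of
  the sets of bins used in each scenario, each of size at most \<open>val_bpps\<close>.\<close>

lemma card_square_le_if_pairs_covered:
  assumes "finite S"
    and "\<And>k. k \<in> S \<Longrightarrow> finite (T k)"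
    and "\<And>k. k \<in> S \<Longrightarrow> card (T k) \<le> m"
    and "\<And>x y. x \<in> X \<Longrightarrow> y \<in> X \<Longrightarrow> \<exists>k\<in>S. x \<in> T k \<and> y \<in> T k"
  shows "card X * card X \<le> card S * (m * m)"
proof -
  have "card X * card X = card (X \<times> X)"
    by (simp add: card_cartesian_product)
  also have "\<dots> \<le> card (\<Union>k\<in>S. T k \<times> T k)"
    using assms by (intro card_mono) blast+
  also have "\<dots> \<le> (\<Sum>k\<in>S. card (T k \<times> T k))"
    by (rule card_UN_le) (use assms(1) in simp)
  also have "\<dots> \<le> (\<Sum>k\<in>S. m * m)"
    using assms(3) by (intro sum_mono) (simp add: card_cartesian_product mult_le_mono)
  finally show ?thesis
    by simp
qed

lemma real_le_sqrt_mult_if_square_le: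
  assumes "n * n \<le> d * (m * m)"
  shows "real n \<le> sqrt (real d) * real m"
proof -
  have "real n = sqrt (real (n * n))"
    by simp
  also have "\<dots> \<le> sqrt (real (d * (m * m)))"
    using assms by (subst real_sqrt_le_iff) linarith
  also have "\<dots> = sqrt (real d) * real m"
    by (simp add: real_sqrt_mult)
  finally show ?thesis .
qed

definition active_bins :: "'a set \<Rightarrow> ('a \<Rightarrow> nat set) \<Rightarrow> 'a set set \<Rightarrow> nat \<Rightarrow> 'a set set" where
  "active_bins I K \<B> k = {B\<in>\<B>. B \<inter> scen I K k \<noteq> {}}"

lemma bpps_solution_finite:
  assumes "bpps_instance d I s K" and "bpps_solution d I s K \<B>"
  shows "finite \<B>"
proof -
  have "\<B> \<subseteq> Pow I"
    using assms(2) by (auto simp: bpps_solution_def partition_on_def)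
  with assms(1) show ?thesis
    by (auto simp: bpps_instance_def intro: finite_subset)
qed

lemma card_active_bins_le_val_bpps:
  assumes "k \<in> {1..d}"
  shows "card (active_bins I K \<B> k) \<le> val_bpps d I K \<B>"
  unfolding val_bpps_def active_bins_def using assms by (intro Max_ge) auto

lemma bpps_bin_active:
  assumes "bpps_instance d I s K" and "bpps_solution d I s K \<B>" and "B \<in> \<B>"
  obtains k where "k \<in> {1..d}" and "B \<in> active_bins I K \<B> k"
proof -
  have "partition_on I \<B>"
    using assms(2) by (simp add: bpps_solution_def)
  then have "B \<noteq> {}" and "B \<subseteq> I"
    using assms(3) by (auto simp: partition_on_def)
  then obtain i where i: "i \<in> B" "i \<in> I"
    by blast
  then obtain k where "k \<in> K i" "k \<in> {1..d}"
    using assms(1) unfolding bpps_instance_def by blast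
  with i assms(3) show thesis
    by (intro that) (auto simp: active_bins_def scen_def)
qed

lemma bpps_minimal_bins_share_active_scenario:
  assumes "bpps_instance d I s K" and "bpps_minimal d I s K \<B>"
    and "A \<in> \<B>" and "B \<in> \<B>"
  shows "\<exists>k\<in>{1..d}. A \<in> active_bins I K \<B> k \<and> B \<in> active_bins I K \<B> k"
proof (cases "A = B")
  case True
  with assms show ?thesis
    by (metis bpps_bin_active bpps_minimal_def)
next
  case False
  obtain k where k: "k \<in> {1..d}"
    and overflow: "(\<Sum>i\<in>A \<inter> scen I K k. s i) + (\<Sum>i\<in>B \<inter> scen I K k. s i) > 1"
    using False assms(2-4) unfolding bpps_minimal_def by blast
  have "(\<Sum>i\<in>A \<inter> scen I K k. s i) \<le> 1" and "(\<Sum>i\<in>B \<inter> scen I K k. s i) \<le> 1"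
    using assms(2-4) k by (auto simp: bpps_minimal_def bpps_solution_def)
  with overflow have "A \<inter> scen I K k \<noteq> {}" and "B \<inter> scen I K k \<noteq> {}"
    by auto
  with k assms(3,4) show ?thesis
    by (auto simp: active_bins_def)
qed

theorem theorem1:
  fixes d :: nat and I :: "'a set" and s :: "'a \<Rightarrow> rat" and K :: "'a \<Rightarrow> nat set"
    and \<B> :: "'a set set"
  assumes "bpps_instance d I s K"
    and "bpps_minimal d I s K \<B>"
  shows "real (val_vbpp \<B>) \<le> sqrt (real d) * real (val_bpps d I K \<B>)"
proof -
  have "finite \<B>"
    using assms bpps_solution_finite by (auto simp: bpps_minimal_def)
  then have "card \<B> * card \<B> \<le> card {1..d} * (val_bpps d I K \<B> * val_bpps d I K \<B>)"
    by (intro card_square_le_if_pairs_covered[where T = "active_bins I K \<B>"]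
        card_active_bins_le_val_bpps bpps_minimal_bins_share_active_scenario[OF assms])
      (auto simp: active_bins_def)
  then show ?thesis
    unfolding val_vbpp_def by (intro real_le_sqrt_mult_if_square_le) simp
qed

end
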